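(* Let $m,n\in\mathbb N$ and let $K\subseteq\mathbb R^n$ be a convex body. Then $S_{n,m+1}(K)^m\le S_{n,m}(K)^{m+1}$.
   Context: For a convex body $K\subseteq\mathbb R^n$, $D^m(K)=\{(x_1,\dots,x_m)\in(\mathbb R^n)^m: K\cap\bigcap_{i=1}^m(K+x_i)\neq\emptyset\}$ and $S_{n,m}(K)=\operatorname{vol}_{nm}(D^m(K))\operatorname{vol}_n(K)^{-m}$, where $\operatorname{vol}_d$ is Lebesgue measure. *)

theory Defs
  imports "HOL-Analysis.Analysis"
begin

definition convex_body :: "(real ^ 'n) set \<Rightarrow> bool" where
  "convex_body K \<longleftrightarrow> compact K \<and> convex K \<and> interior K \<noteq> {}"

text \<open>Points of (R^n)^m are represented as functions on the index set {..<m}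
  (extensional, value undefined outside), the carrier of the product measure.\<close>
definition diff_body :: "nat \<Rightarrow> (real ^ 'n) set \<Rightarrow> (nat \<Rightarrow> real ^ 'n) set" where
  "diff_body m K = {x \<in> PiE {..<m} (\<lambda>_. UNIV).
      K \<inter> (\<Inter>i\<in>{..<m}. (\<lambda>y. y + x i) ` K) \<noteq> {}}"

definition S_ratio :: "nat \<Rightarrow> (real ^ 'n) set \<Rightarrow> real" where
  "S_ratio m K = measure (PiM {..<m} (\<lambda>_. lborel)) (diff_body m K)
      / (measure lborel K) ^ m"

end

theory Submission
  imports Defs
begin

text \<open>Deleting any one of the \<open>m + 1\<close> coordinates of a point of the \<open>(m+1)\<close>-fold difference
  body \<open>D(m+1)\<close> of \<open>K\<close> gives a point of \<open>D(m)\<close>. The Loomis--Whitney inequality on the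
  \<open>(m+1)\<close>-fold product of \<open>\<real>\<^sup>n\<close> (proved by induction on the number of factors from the
  generalised Hoelder inequality, itself a consequence of weighted AM-GM) therefore gives
  \<open>vol D(m+1) \<le> vol D(m) powr ((m+1)/m)\<close>; dividing by \<open>vol(K)\<^bsup>m(m+1)\<^esup>\<close> gives the claim.\<close>

section \<open>Weighted AM-GM and real powers of extended reals\<close>

lemma weighted_arith_geom_mean:
  fixes a w :: "'i \<Rightarrow> real"
  assumes J: "finite J" "J \<noteq> {}" and w: "\<And>j. j \<in> J \<Longrightarrow> w j > 0" "sum w J = 1"
    and a: "\<And>j. j \<in> J \<Longrightarrow> a j \<ge> 0"
  shows "(\<Prod>j\<in>J. a j powr w j) \<le> (\<Sum>j\<in>J. w j * a j)"
proof (cases "\<exists>j\<in>J. a j = 0")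
  case True
  then have "(\<Prod>j\<in>J. a j powr w j) = 0" using J by (auto intro: prod_zero)
  moreover have "0 \<le> (\<Sum>j\<in>J. w j * a j)" using w a by (intro sum_nonneg mult_nonneg_nonneg) (auto simp: less_imp_le)
  ultimately show ?thesis by simp
next
  case False
  have ap: "\<And>j. j \<in> J \<Longrightarrow> a j > 0" using False a by force
  have "exp (\<Sum>j\<in>J. w j *\<^sub>R ln (a j)) \<le> (\<Sum>j\<in>J. w j * exp (ln (a j)))"
    by (rule convex_on_sum[OF J exp_convex w(2)]) (use w in \<open>auto simp: less_imp_le\<close>)
  also have "\<dots> = (\<Sum>j\<in>J. w j * a j)" using ap by (auto intro!: sum.cong)
  also have "exp (\<Sum>j\<in>J. w j *\<^sub>R ln (a j)) = (\<Prod>j\<in>J. a j powr w j)"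
    using ap J by (simp add: exp_sum powr_def mult.commute, intro prod.cong) (auto dest: ap)
  finally show ?thesis .
qed

text \<open>Convention: \<open>\<infinity> powr w = \<infinity>\<close> for every \<open>w\<close>; this is only sensible for \<open>w > 0\<close>.\<close>
definition enn_powr :: "ennreal \<Rightarrow> real \<Rightarrow> ennreal" where
  "enn_powr a w = (if a = top then top else ennreal (enn2real a powr w))"

lemma enn_powr_top [simp]: "enn_powr top w = top"
  by (simp add: enn_powr_def)

lemma enn_powr_ennreal: "x \<ge> 0 \<Longrightarrow> enn_powr (ennreal x) w = ennreal (x powr w)"
  by (simp add: enn_powr_def)

lemma enn_powr_0 [simp]: "enn_powr 0 w = 0"
  by (simp add: enn_powr_def)

lemma enn_powr_1 [simp]: "enn_powr 1 w = 1"
  by (simp add: enn_powr_def)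

lemma enn_powr_one [simp]: "enn_powr a 1 = a"
  by (cases a) (auto simp: enn_powr_def)

lemma enn_powr_eq_0_iff: "w > 0 \<Longrightarrow> enn_powr a w = 0 \<longleftrightarrow> a = 0"
  unfolding enn_powr_def by (cases a) (auto simp: ennreal_eq_0_iff)

lemma enn_powr_eq_top_iff: "enn_powr a w = top \<longleftrightarrow> a = top"
  by (cases a) (auto simp: enn_powr_def)

lemma enn_powr_powr: "enn_powr (enn_powr a w) v = enn_powr a (w * v)"
  by (cases a) (auto simp: enn_powr_def powr_powr)

lemma enn_powr_of_nat: "n > 0 \<Longrightarrow> enn_powr a (real n) = a ^ n"
  by (cases a) (auto simp: enn_powr_def powr_realpow' ennreal_power)

lemma enn_powr_mult: "enn_powr (a * b) w = enn_powr a w * enn_powr b w"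
proof (cases "a = top \<or> b = top")
  case True
  show ?thesis
  proof (cases "a = 0 \<or> b = 0")
    case False
    then have "a * b = top" using True by (auto simp: ennreal_mult_eq_top_iff)
    moreover have "enn_powr a w \<noteq> 0" "enn_powr b w \<noteq> 0" using False
      by (auto simp: enn_powr_def ennreal_eq_0_iff enn2real_eq_0_iff split: if_splits)
    moreover have "enn_powr a w = top \<or> enn_powr b w = top" using True by auto
    ultimately show ?thesis by (auto simp: ennreal_mult_eq_top_iff)
  qed auto
next
  case False
  then obtain x y where xy: "a = ennreal x" "b = ennreal y" "x \<ge> 0" "y \<ge> 0"
    by (metis enn2real_nonneg ennreal_enn2real_if)
  then show ?thesis by (simp add: enn_powr_ennreal powr_mult ennreal_mult[symmetric])
qed

lemma enn_powr_prod: "finite J \<Longrightarrow> enn_powr (\<Prod>j\<in>J. f j) w = (\<Prod>j\<in>J. enn_powr (f j) w)"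
  by (induction J rule: finite_induct) (simp_all add: enn_powr_mult)

lemma enn_powr_mono:
  assumes ab: "a \<le> b" and w: "w \<ge> 0"
  shows "enn_powr a w \<le> enn_powr b w"
proof (cases "b = top")
  case False
  then have "a \<noteq> top" using ab by (metis top_unique)
  moreover have "enn2real a \<le> enn2real b" using ab False by (intro enn2real_mono) (auto simp: top.not_eq_extremum)
  ultimately show ?thesis using False w by (simp add: enn_powr_def powr_mono2)
qed simp

lemma measurable_enn_powr [measurable]:
  assumes f: "f \<in> borel_measurable M"
  shows "(\<lambda>x. enn_powr (f x) w) \<in> borel_measurable M"
proof -
  have "{x \<in> space M. f x = top} \<in> sets M"
    using measurable_sets[OF f, of "{top}"] by (simp add: vimage_def Int_def conj_commute)
  moreover have "(\<lambda>x. ennreal (enn2real (f x) powr w)) \<in> borel_measurable M"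
    by (intro measurable_compose[OF _ measurable_ennreal] powr_real_measurable
        borel_measurable_enn2real f borel_measurable_const)
  ultimately show ?thesis unfolding enn_powr_def
    by (intro measurable_If measurable_const) auto
qed

lemma enn2real_power: "enn2real (a ^ n) = enn2real a ^ n"
  by (cases a) (auto simp: ennreal_power top_power_ennreal)

lemma weighted_arith_geom_mean_ennreal:
  fixes a :: "'i \<Rightarrow> ennreal" and w :: "'i \<Rightarrow> real"
  assumes J: "finite J" "J \<noteq> {}" and w: "\<And>j. j \<in> J \<Longrightarrow> w j > 0" "sum w J = 1"
  shows "(\<Prod>j\<in>J. enn_powr (a j) (w j)) \<le> (\<Sum>j\<in>J. ennreal (w j) * a j)"
proof (cases "\<exists>j\<in>J. a j = top")
  case True
  then obtain j where j: "j \<in> J" "a j = top" by auto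
  then have "ennreal (w j) * a j = top" using w(1)[OF j(1)] by (simp add: ennreal_mult_top)
  then have "(\<Sum>j\<in>J. ennreal (w j) * a j) = top" using J(1) j(1) ennreal_sum_eq_top by blast
  then show ?thesis by simp
next
  case False
  define b where "b j = enn2real (a j)" for j
  have ab: "\<And>j. j \<in> J \<Longrightarrow> a j = ennreal (b j)" using False by (auto simp: b_def ennreal_enn2real_if)
  have b0: "\<And>j. b j \<ge> 0" by (simp add: b_def)
  have "(\<Prod>j\<in>J. enn_powr (a j) (w j)) = ennreal (\<Prod>j\<in>J. b j powr w j)"
    using ab b0 by (subst prod_ennreal[symmetric]) (auto intro!: prod.cong simp: enn_powr_ennreal)
  also have "\<dots> \<le> ennreal (\<Sum>j\<in>J. w j * b j)"
    by (rule ennreal_leI, rule weighted_arith_geom_mean[OF J w]) (auto simp: b0)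
  also have "\<dots> = (\<Sum>j\<in>J. ennreal (w j) * a j)"
    using ab w b0 by (subst sum_ennreal[symmetric]) (auto intro!: sum.cong simp: ennreal_mult less_imp_le)
  finally show ?thesis .
qed

section \<open>Hoelder's inequality for nonnegative integrals\<close>

lemma prod_enn_powr_le_rescaled:
  fixes f :: "'i \<Rightarrow> ennreal" and c w :: "'i \<Rightarrow> real"
  assumes J: "finite J" "J \<noteq> {}" and w: "\<And>j. j \<in> J \<Longrightarrow> w j > 0" "sum w J = 1"
    and c: "\<And>j. j \<in> J \<Longrightarrow> c j > 0"
  shows "(\<Prod>j\<in>J. enn_powr (f j) (w j))
    \<le> (\<Prod>j\<in>J. enn_powr (ennreal (c j)) (w j)) * (\<Sum>j\<in>J. ennreal (w j) * (ennreal (1 / c j) * f j))"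
proof -
  have "(\<Prod>j\<in>J. enn_powr (f j) (w j))
      = (\<Prod>j\<in>J. enn_powr (ennreal (c j)) (w j) * enn_powr (ennreal (1 / c j) * f j) (w j))"
  proof (intro prod.cong refl)
    fix j assume "j \<in> J"
    then have "f j = ennreal (c j) * (ennreal (1 / c j) * f j)"
      using c[of j] by (simp add: mult.assoc[symmetric] ennreal_mult[symmetric])
    then show "enn_powr (f j) (w j) = enn_powr (ennreal (c j)) (w j) * enn_powr (ennreal (1 / c j) * f j) (w j)"
      by (metis enn_powr_mult)
  qed
  also have "\<dots> \<le> (\<Prod>j\<in>J. enn_powr (ennreal (c j)) (w j)) * (\<Sum>j\<in>J. ennreal (w j) * (ennreal (1 / c j) * f j))"
    by (simp only: prod.distrib) (intro mult_left_mono weighted_arith_geom_mean_ennreal[OF J w]; simp)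
  finally show ?thesis .
qed

theorem nn_integral_prod_enn_powr_le:
  fixes F :: "'i \<Rightarrow> 'a \<Rightarrow> ennreal" and w :: "'i \<Rightarrow> real"
  assumes J: "finite J" "J \<noteq> {}" and w: "\<And>j. j \<in> J \<Longrightarrow> w j > 0" "sum w J = 1"
    and F: "\<And>j. j \<in> J \<Longrightarrow> F j \<in> borel_measurable M"
  shows "(\<integral>\<^sup>+x. (\<Prod>j\<in>J. enn_powr (F j x) (w j)) \<partial>M) \<le> (\<Prod>j\<in>J. enn_powr (\<integral>\<^sup>+x. F j x \<partial>M) (w j))"
proof (cases "\<exists>j\<in>J. (\<integral>\<^sup>+x. F j x \<partial>M) = 0")
  case True
  then obtain j where j: "j \<in> J" "(\<integral>\<^sup>+x. F j x \<partial>M) = 0" by auto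
  then have "AE x in M. F j x = 0" using F[OF j(1)] by (simp add: nn_integral_0_iff_AE)
  then have "AE x in M. (\<Prod>j\<in>J. enn_powr (F j x) (w j)) = 0"
    by eventually_elim (use j J in \<open>auto intro!: prod_zero bexI[of _ j]\<close>)
  then have "(\<integral>\<^sup>+x. (\<Prod>j\<in>J. enn_powr (F j x) (w j)) \<partial>M) = (\<integral>\<^sup>+x. 0 \<partial>M)"
    by (rule nn_integral_cong_AE)
  then show ?thesis by simp
next
  case nonzero: False
  show ?thesis
  proof (cases "\<exists>j\<in>J. (\<integral>\<^sup>+x. F j x \<partial>M) = top")
    case True
    have "(\<Prod>j\<in>J. enn_powr (\<integral>\<^sup>+x. F j x \<partial>M) (w j)) = top"
      using True nonzero J w by (subst ennreal_prod_eq_top) (auto simp: enn_powr_eq_0_iff enn_powr_eq_top_iff)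
    then show ?thesis by simp
  next
    case False
    define c where "c j = enn2real (\<integral>\<^sup>+x. F j x \<partial>M)" for j
    have cI: "\<And>j. j \<in> J \<Longrightarrow> (\<integral>\<^sup>+x. F j x \<partial>M) = ennreal (c j)"
      using False by (auto simp: c_def ennreal_enn2real_if)
    have c_pos: "\<And>j. j \<in> J \<Longrightarrow> c j > 0"
      using nonzero False by (auto simp: c_def enn2real_positive_iff top.not_eq_extremum zero_less_iff_neq_zero)
    define C where "C = (\<Prod>j\<in>J. enn_powr (ennreal (c j)) (w j))"
    have "(\<integral>\<^sup>+x. (\<Prod>j\<in>J. enn_powr (F j x) (w j)) \<partial>M)
        \<le> (\<integral>\<^sup>+x. C * (\<Sum>j\<in>J. ennreal (w j) * (ennreal (1 / c j) * F j x)) \<partial>M)"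
      unfolding C_def by (intro nn_integral_mono prod_enn_powr_le_rescaled[OF J w c_pos])
    also have "\<dots> = C * (\<Sum>j\<in>J. ennreal (w j) * (ennreal (1 / c j) * (\<integral>\<^sup>+x. F j x \<partial>M)))"
      using F by (simp add: nn_integral_cmult nn_integral_sum)
    also have "\<dots> = C * (\<Sum>j\<in>J. ennreal (w j))"
      using c_pos by (intro arg_cong2[where f="(*)"] sum.cong refl)
        (force simp: cI ennreal_mult[symmetric] less_imp_le)
    also have "\<dots> = C" using w by (subst sum_ennreal) (auto simp: less_imp_le)
    finally show ?thesis by (simp add: C_def cI cong: prod.cong)
  qed
qed

corollary nn_integral_mult_enn_powr_le:
  assumes f: "f \<in> borel_measurable M" and g: "g \<in> borel_measurable M"
    and pq: "p > 0" "q > 0" "p + q = 1"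
  shows "(\<integral>\<^sup>+x. enn_powr (f x) p * enn_powr (g x) q \<partial>M)
    \<le> enn_powr (\<integral>\<^sup>+x. f x \<partial>M) p * enn_powr (\<integral>\<^sup>+x. g x \<partial>M) q"
  using nn_integral_prod_enn_powr_le[of "{True, False}" "\<lambda>b. if b then p else q" "\<lambda>b. if b then f else g" M]
    assms by simp

section \<open>A Loomis--Whitney inequality\<close>

context
  fixes N :: "'a measure"
  assumes N: "sigma_finite_measure N"
begin

interpretation P: product_sigma_finite "\<lambda>_::nat. N"
  by (simp add: product_sigma_finite_def N)

lemma measurable_restrict_fun_upd:
  assumes z: "z \<in> space (PiM I (\<lambda>_::nat. N))" and i: "i \<notin> I" and T: "T \<subseteq> insert i I"
    and f: "f \<in> borel_measurable (PiM T (\<lambda>_. N))"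
  shows "(\<lambda>y. f (restrict (z(i := y)) T)) \<in> borel_measurable N"
  using measurable_compose[OF measurable_component_update[OF z i]
      measurable_compose[OF measurable_restrict_subset[OF T] f]] .

lemma borel_measurable_nn_integral_fun_upd:
  assumes "f \<in> borel_measurable (PiM (insert i I) (\<lambda>_::nat. N))"
  shows "(\<lambda>w. \<integral>\<^sup>+y. f (w(i := y)) \<partial>N) \<in> borel_measurable (PiM I (\<lambda>_. N))"
proof -
  have "(\<lambda>(w, y). f (w(i := y))) \<in> borel_measurable (PiM I (\<lambda>_. N) \<Otimes>\<^sub>M N)"
    using measurable_compose[OF measurable_add_dim[of i I "\<lambda>_. N"] assms] by (simp add: case_prod_beta')
  then show ?thesis
    by (intro sigma_finite_measure.borel_measurable_nn_integral[OF N]) (simp add: case_prod_beta')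
qed

text \<open>Integrating out the coordinate \<open>i\<close> by Hoelder's inequality with \<open>card I\<close> equal weights.\<close>
lemma nn_integral_Loomis_Whitney_insert_le:
  fixes I :: "nat set"
  assumes I: "finite I" "I \<noteq> {}" and i: "i \<notin> I"
    and F: "\<And>j. j \<in> insert i I \<Longrightarrow> F j \<in> borel_measurable (PiM (insert i I - {j}) (\<lambda>_. N))"
  defines "e \<equiv> 1 / real (card I)"
  shows "(\<integral>\<^sup>+x. (\<Prod>j\<in>insert i I. enn_powr (F j (restrict x (insert i I - {j}))) e) \<partial>PiM (insert i I) (\<lambda>_. N))
    \<le> (\<integral>\<^sup>+z. enn_powr (F i z) e * (\<Prod>j\<in>I. enn_powr (\<integral>\<^sup>+y. F j ((restrict z (I - {j}))(i := y)) \<partial>N) e)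
        \<partial>PiM I (\<lambda>_. N))"
proof -
  let ?f = "\<lambda>j x. F j (restrict x (insert i I - {j}))"
  have f_meas: "(\<lambda>x. \<Prod>j\<in>insert i I. enn_powr (?f j x) e) \<in> borel_measurable (PiM (insert i I) (\<lambda>_. N))"
    by (intro borel_measurable_prod_ennreal measurable_enn_powr
        measurable_compose[OF measurable_restrict_subset F]) auto
  have slice: "(\<integral>\<^sup>+y. (\<Prod>j\<in>insert i I. enn_powr (?f j (z(i := y))) e) \<partial>N)
      \<le> enn_powr (F i z) e * (\<Prod>j\<in>I. enn_powr (\<integral>\<^sup>+y. F j ((restrict z (I - {j}))(i := y)) \<partial>N) e)"
    if z: "z \<in> space (PiM I (\<lambda>_. N))" for z
  proof -
    have z_ext: "restrict z I = z"
      using z by (simp add: space_PiM PiE_def extensional_restrict)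
    have "(\<lambda>y. \<Prod>j\<in>I. enn_powr (?f j (z(i := y))) e) \<in> borel_measurable N"
      by (intro borel_measurable_prod_ennreal measurable_enn_powr measurable_restrict_fun_upd[OF z i] F) auto
    then have "(\<integral>\<^sup>+y. (\<Prod>j\<in>insert i I. enn_powr (?f j (z(i := y))) e) \<partial>N)
        = enn_powr (F i z) e * (\<integral>\<^sup>+y. (\<Prod>j\<in>I. enn_powr (?f j (z(i := y))) e) \<partial>N)"
      using I i z_ext by (simp add: nn_integral_cmult)
    also have "\<dots> \<le> enn_powr (F i z) e * (\<Prod>j\<in>I. enn_powr (\<integral>\<^sup>+y. ?f j (z(i := y)) \<partial>N) e)"
      using I i by (intro mult_left_mono nn_integral_prod_enn_powr_le measurable_restrict_fun_upd[OF z i] F)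
        (auto simp: e_def card_gt_0_iff)
    also have "\<dots> = enn_powr (F i z) e * (\<Prod>j\<in>I. enn_powr (\<integral>\<^sup>+y. F j ((restrict z (I - {j}))(i := y)) \<partial>N) e)"
      by (intro arg_cong2[where f="(*)"] prod.cong refl) (use i in \<open>auto simp: insert_Diff_if\<close>)
    finally show ?thesis .
  qed
  have "(\<integral>\<^sup>+x. (\<Prod>j\<in>insert i I. enn_powr (?f j x) e) \<partial>PiM (insert i I) (\<lambda>_. N))
      = (\<integral>\<^sup>+z. (\<integral>\<^sup>+y. (\<Prod>j\<in>insert i I. enn_powr (?f j (z(i := y))) e) \<partial>N) \<partial>PiM I (\<lambda>_. N))"
    by (rule P.product_nn_integral_insert[OF I(1) i f_meas])
  also have "\<dots> \<le> (\<integral>\<^sup>+z. enn_powr (F i z) e * (\<Prod>j\<in>I. enn_powr (\<integral>\<^sup>+y. F j ((restrict z (I - {j}))(i := y)) \<partial>N) e)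
        \<partial>PiM I (\<lambda>_. N))"
    by (intro nn_integral_mono slice)
  finally show ?thesis .
qed

text \<open>Hoelder with the two weights \<open>1 / card I\<close> and \<open>1 - 1 / card I\<close> reduces the integral to the
  Loomis--Whitney inequality for \<open>I\<close> itself.\<close>
lemma nn_integral_Loomis_Whitney_combine:
  fixes I :: "nat set"
  assumes I: "finite I" "card I \<ge> 2" and f: "f \<in> borel_measurable (PiM I (\<lambda>_. N))"
    and G: "\<And>j. j \<in> I \<Longrightarrow> G j \<in> borel_measurable (PiM (I - {j}) (\<lambda>_. N))"
    and LW: "(\<integral>\<^sup>+z. (\<Prod>j\<in>I. enn_powr (G j (restrict z (I - {j}))) (1 / real (card I - 1))) \<partial>PiM I (\<lambda>_. N))
      \<le> (\<Prod>j\<in>I. enn_powr (\<integral>\<^sup>+w. G j w \<partial>PiM (I - {j}) (\<lambda>_. N)) (1 / real (card I - 1)))"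
  defines "e \<equiv> 1 / real (card I)"
  shows "(\<integral>\<^sup>+z. enn_powr (f z) e * (\<Prod>j\<in>I. enn_powr (G j (restrict z (I - {j}))) e) \<partial>PiM I (\<lambda>_. N))
    \<le> enn_powr (\<integral>\<^sup>+z. f z \<partial>PiM I (\<lambda>_. N)) e * (\<Prod>j\<in>I. enn_powr (\<integral>\<^sup>+w. G j w \<partial>PiM (I - {j}) (\<lambda>_. N)) e)"
proof -
  define v where "v = real (card I - 1) / real (card I)"
  define Q where "Q z = (\<Prod>j\<in>I. enn_powr (G j (restrict z (I - {j}))) (1 / real (card I - 1)))" for z
  have v: "e > 0" "v > 0" "e + v = 1"
    using I by (auto simp: v_def e_def of_nat_diff add_divide_distrib[symmetric])
  have powr_v: "enn_powr (enn_powr a (1 / real (card I - 1))) v = enn_powr a e" for a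
    using I by (simp add: enn_powr_powr v_def e_def of_nat_diff)
  have Q_meas: "Q \<in> borel_measurable (PiM I (\<lambda>_. N))"
    unfolding Q_def by (intro borel_measurable_prod_ennreal measurable_enn_powr
        measurable_compose[OF measurable_restrict_subset G]) auto
  have "(\<integral>\<^sup>+z. enn_powr (f z) e * (\<Prod>j\<in>I. enn_powr (G j (restrict z (I - {j}))) e) \<partial>PiM I (\<lambda>_. N))
      = (\<integral>\<^sup>+z. enn_powr (f z) e * enn_powr (Q z) v \<partial>PiM I (\<lambda>_. N))"
    by (simp only: Q_def enn_powr_prod[OF I(1)] powr_v)
  also have "\<dots> \<le> enn_powr (\<integral>\<^sup>+z. f z \<partial>PiM I (\<lambda>_. N)) e * enn_powr (\<integral>\<^sup>+z. Q z \<partial>PiM I (\<lambda>_. N)) v"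
    using v by (intro nn_integral_mult_enn_powr_le f Q_meas) auto
  also have "\<dots> \<le> enn_powr (\<integral>\<^sup>+z. f z \<partial>PiM I (\<lambda>_. N)) e
      * (\<Prod>j\<in>I. enn_powr (\<integral>\<^sup>+w. G j w \<partial>PiM (I - {j}) (\<lambda>_. N)) e)"
    using enn_powr_mono[OF LW[folded Q_def], of v] v
    by (intro mult_left_mono) (simp_all only: enn_powr_prod[OF I(1)] powr_v zero_le)
  finally show ?thesis .
qed

theorem nn_integral_Loomis_Whitney:
  fixes I :: "nat set"
  assumes "finite I" "card I \<ge> 2"
    and "\<And>j. j \<in> I \<Longrightarrow> F j \<in> borel_measurable (PiM (I - {j}) (\<lambda>_. N))"
  shows "(\<integral>\<^sup>+x. (\<Prod>j\<in>I. enn_powr (F j (restrict x (I - {j}))) (1 / real (card I - 1))) \<partial>PiM I (\<lambda>_. N))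
    \<le> (\<Prod>j\<in>I. enn_powr (\<integral>\<^sup>+y. F j y \<partial>PiM (I - {j}) (\<lambda>_. N)) (1 / real (card I - 1)))"
  using assms
proof (induction I arbitrary: F rule: finite_induct)
  case (insert i I F)
  define e where "e = 1 / real (card I)"
  have I: "I \<noteq> {}" "card (insert i I) - 1 = card I" "card I \<ge> 1"
    using insert.hyps insert.prems(1) by (auto simp: Suc_le_eq card_gt_0_iff)
  have Fi: "F i \<in> borel_measurable (PiM I (\<lambda>_. N))"
    using insert.prems(2)[of i] insert.hyps by simp
  have insert_Diff: "insert i I - {j} = insert i (I - {j})" if "j \<in> I" for j
    using insert.hyps that by auto
  have Fj: "F j \<in> borel_measurable (PiM (insert i (I - {j})) (\<lambda>_. N))" if "j \<in> I" for j
    using insert.prems(2)[of j] that by (simp add: insert_Diff)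
  define G where "G j w = (\<integral>\<^sup>+y. F j (w(i := y)) \<partial>N)" for j w
  have G_meas: "G j \<in> borel_measurable (PiM (I - {j}) (\<lambda>_. N))" if "j \<in> I" for j
    unfolding G_def by (rule borel_measurable_nn_integral_fun_upd[OF Fj[OF that]])
  have G_int: "(\<integral>\<^sup>+w. G j w \<partial>PiM (I - {j}) (\<lambda>_. N)) = (\<integral>\<^sup>+y. F j y \<partial>PiM (insert i I - {j}) (\<lambda>_. N))"
    if "j \<in> I" for j
    using P.product_nn_integral_insert[of "I - {j}" i "F j"] insert.hyps that Fj[OF that]
    by (simp add: G_def insert_Diff)
  have "(\<integral>\<^sup>+x. (\<Prod>j\<in>insert i I. enn_powr (F j (restrict x (insert i I - {j}))) e) \<partial>PiM (insert i I) (\<lambda>_. N))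
      \<le> (\<integral>\<^sup>+z. enn_powr (F i z) e * (\<Prod>j\<in>I. enn_powr (G j (restrict z (I - {j}))) e) \<partial>PiM I (\<lambda>_. N))"
    unfolding G_def e_def
    by (rule nn_integral_Loomis_Whitney_insert_le[OF insert.hyps(1) I(1) insert.hyps(2) insert.prems(2)])
  also have "\<dots> \<le> enn_powr (\<integral>\<^sup>+z. F i z \<partial>PiM I (\<lambda>_. N)) e
      * (\<Prod>j\<in>I. enn_powr (\<integral>\<^sup>+w. G j w \<partial>PiM (I - {j}) (\<lambda>_. N)) e)"
  proof (cases "card I = 1")
    case True
    then obtain a where a: "I = {a}" by (metis card_1_singletonE)
    have "(\<integral>\<^sup>+z. enn_powr (F i z) e * (\<Prod>j\<in>I. enn_powr (G j (restrict z (I - {j}))) e) \<partial>PiM I (\<lambda>_. N))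
        = (\<integral>\<^sup>+z. F i z \<partial>PiM I (\<lambda>_. N)) * G a (\<lambda>_. undefined)"
      using nn_integral_multc[OF Fi] by (simp add: a e_def restrict_def)
    then show ?thesis by (simp add: a e_def P.nn_integral_empty)
  next
    case False
    then show ?thesis
      unfolding e_def
      by (intro nn_integral_Loomis_Whitney_combine insert.IH insert.hyps(1) Fi G_meas) (use I in auto)
  qed
  also have "\<dots> = (\<Prod>j\<in>insert i I. enn_powr (\<integral>\<^sup>+y. F j y \<partial>PiM (insert i I - {j}) (\<lambda>_. N)) e)"
    using insert.hyps by (simp add: G_int cong: prod.cong)
  finally show ?case by (simp only: I(2) e_def)
qed simp

end

section \<open>Difference bodies indexed by a set\<close>

definition diff_body_on :: "nat set \<Rightarrow> 'a::ab_group_add set \<Rightarrow> (nat \<Rightarrow> 'a) set" where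
  "diff_body_on S K = {x \<in> PiE S (\<lambda>_. UNIV). \<exists>y\<in>K. \<forall>i\<in>S. y - x i \<in> K}"

lemma diff_body_eq_diff_body_on: "diff_body m K = diff_body_on {..<m} K"
proof -
  have translate: "y \<in> (\<lambda>y. y + c) ` K \<longleftrightarrow> y - c \<in> K" for y c
    by (metis (no_types, lifting) diff_add_cancel image_iff add_diff_cancel)
  show ?thesis
    unfolding diff_body_def diff_body_on_def by (auto simp: translate) blast+
qed

lemma restrict_in_diff_body_on:
  "x \<in> diff_body_on I K \<Longrightarrow> J \<subseteq> I \<Longrightarrow> restrict x J \<in> diff_body_on J K"
  by (auto simp: diff_body_on_def)

lemma diff_body_on_empty_index: "K \<noteq> {} \<Longrightarrow> diff_body_on {} K = {\<lambda>_. undefined}"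
  by (auto simp: diff_body_on_def)

lemma diff_body_on_eq_dense:
  fixes K :: "'a::euclidean_space set"
  assumes K: "compact K" "K \<noteq> {}" and D: "\<And>X. open X \<Longrightarrow> X \<noteq> {} \<Longrightarrow> \<exists>d\<in>D. d \<in> X"
  shows "diff_body_on S K = {x \<in> PiE S (\<lambda>_. UNIV). \<forall>n. \<exists>q\<in>D.
      infdist q K \<le> inverse (Suc n) \<and> (\<forall>i\<in>S. infdist (q - x i) K \<le> inverse (Suc n))}"
proof (intro set_eqI iffI)
  fix x assume "x \<in> diff_body_on S K"
  then obtain y where x: "x \<in> PiE S (\<lambda>_. UNIV)" and y: "y \<in> K" "\<And>i. i \<in> S \<Longrightarrow> y - x i \<in> K"
    by (auto simp: diff_body_on_def)
  have "\<exists>q\<in>D. infdist q K \<le> inverse (Suc n) \<and> (\<forall>i\<in>S. infdist (q - x i) K \<le> inverse (Suc n))" for n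
  proof -
    obtain q where q: "q \<in> D" "dist q y \<le> inverse (Suc n)"
      using D[of "ball y (inverse (Suc n))"] by (auto simp: dist_commute less_imp_le)
    have "dist (q - x i) (y - x i) \<le> inverse (Suc n)" for i
      using q(2) by (simp add: dist_norm)
    then show ?thesis
      using q y by (blast intro: infdist_le2)
  qed
  with x show "x \<in> {x \<in> PiE S (\<lambda>_. UNIV). \<forall>n. \<exists>q\<in>D.
      infdist q K \<le> inverse (Suc n) \<and> (\<forall>i\<in>S. infdist (q - x i) K \<le> inverse (Suc n))}"
    by blast
next
  fix x assume "x \<in> {x \<in> PiE S (\<lambda>_. UNIV). \<forall>n. \<exists>q\<in>D.
      infdist q K \<le> inverse (Suc n) \<and> (\<forall>i\<in>S. infdist (q - x i) K \<le> inverse (Suc n))}"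
  then have x: "x \<in> PiE S (\<lambda>_. UNIV)"
    and near: "\<forall>n. \<exists>q\<in>D. infdist q K \<le> inverse (Suc n) \<and> (\<forall>i\<in>S. infdist (q - x i) K \<le> inverse (Suc n))"
    by blast+
  define C where "C n = {q. infdist q K \<le> inverse (Suc n)} \<inter> (\<Inter>i\<in>S. {q. infdist (q - x i) K \<le> inverse (Suc n)})"
    for n :: nat
  have closed_near: "closed {q. infdist (q - c) K \<le> \<epsilon>}" for c \<epsilon>
    by (intro closed_Collect_le continuous_intros)
  have "compact (C n)" for n
    unfolding C_def
  proof (rule compact_Int_closed)
    show "compact {q. infdist q K \<le> inverse (Suc n)}"
      using K by (intro compact_infdist_le) auto
    show "closed (\<Inter>i\<in>S. {q. infdist (q - x i) K \<le> inverse (Suc n)})"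
      by (intro closed_INT ballI closed_near)
  qed
  moreover have "C n \<noteq> {}" for n
  proof -
    obtain q where "infdist q K \<le> inverse (Suc n)" "\<forall>i\<in>S. infdist (q - x i) K \<le> inverse (Suc n)"
      using near by blast
    then show ?thesis by (auto simp: C_def)
  qed
  moreover have "C n \<subseteq> C m" if "m \<le> n" for m n
  proof -
    have "inverse (real (Suc n)) \<le> inverse (real (Suc m))"
      using that by (intro le_imp_inverse_le) auto
    then show ?thesis by (auto simp: C_def intro: order_trans)
  qed
  ultimately have "\<Inter>(range C) \<noteq> {}"
    by (rule compact_nest)
  then obtain a where a: "\<And>n. a \<in> C n"
    by blast
  have in_K: "v \<in> K" if "\<And>n. infdist v K \<le> inverse (Suc n)" for v
  proof -
    have "infdist v K \<le> 0"
      by (rule LIMSEQ_le_const[OF LIMSEQ_inverse_real_of_nat]) (use that in blast)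
    then show ?thesis
      using in_closed_iff_infdist_zero[OF compact_imp_closed[OF K(1)] K(2)] infdist_nonneg[of v K] by simp
  qed
  have "a \<in> K" "\<And>i. i \<in> S \<Longrightarrow> a - x i \<in> K"
    using a by (auto simp: C_def intro!: in_K)
  with x show "x \<in> diff_body_on S K"
    by (auto simp: diff_body_on_def)
qed

lemma sets_diff_body_on:
  fixes K :: "'a::euclidean_space set"
  assumes S: "countable S" and K: "compact K"
  shows "diff_body_on S K \<in> sets (PiM S (\<lambda>_. lborel))"
proof (cases "K = {}")
  case False
  obtain D :: "'a set" where D: "countable D" "\<And>X. open X \<Longrightarrow> X \<noteq> {} \<Longrightarrow> \<exists>d\<in>D. d \<in> X"
    using countable_dense_exists by blast
  have coordinate: "{x \<in> space (PiM S (\<lambda>_. lborel)). infdist (q - x i) K \<le> c} \<in> sets (PiM S (\<lambda>_. lborel))"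
    if "i \<in> S" for q i c
    using sets_Collect_single[OF that, of "{v. infdist (q - v) K \<le> c}" "\<lambda>_. lborel"]
    by (simp add: closed_Collect_le continuous_intros)
  have "{x \<in> space (PiM S (\<lambda>_. lborel)). \<forall>n. \<exists>q\<in>D. infdist q K \<le> inverse (Suc n)
      \<and> (\<forall>i\<in>S. infdist (q - x i) K \<le> inverse (Suc n))} \<in> sets (PiM S (\<lambda>_. lborel))"
    by (intro sets.sets_Collect_countable_All sets.sets_Collect_countable_Ex' sets.sets_Collect_conj
        sets.sets_Collect_const sets.sets_Collect_countable_All' coordinate S D(1))
  then show ?thesis
    using diff_body_on_eq_dense[OF K False D(2)] by (simp add: space_PiM)
qed (simp add: diff_body_on_def)

lemma emeasure_diff_body_on_less_top:
  fixes K :: "'a::euclidean_space set"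
  assumes S: "finite S" and K: "bounded K"
  shows "emeasure (PiM S (\<lambda>_. lborel :: 'a measure)) (diff_body_on S K) < top"
proof -
  obtain B where B: "\<And>k. k \<in> K \<Longrightarrow> norm k \<le> B"
    using K by (auto simp: bounded_iff)
  have "diff_body_on S K \<subseteq> PiE S (\<lambda>_. cball 0 (2 * B))"
  proof
    fix x assume "x \<in> diff_body_on S K"
    then obtain y where x: "x \<in> PiE S (\<lambda>_. UNIV)" "y \<in> K" "\<And>i. i \<in> S \<Longrightarrow> y - x i \<in> K"
      by (auto simp: diff_body_on_def)
    have "norm (x i) \<le> 2 * B" if "i \<in> S" for i
      using norm_triangle_ineq4[of y "y - x i"] B[OF x(2)] B[OF x(3)[OF that]] by simp
    then show "x \<in> PiE S (\<lambda>_. cball 0 (2 * B))"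
      using x(1) by (auto simp: PiE_iff)
  qed
  then have "emeasure (PiM S (\<lambda>_. lborel)) (diff_body_on S K) \<le> emeasure (PiM S (\<lambda>_. lborel)) (PiE S (\<lambda>_. cball (0::'a) (2 * B)))"
    by (intro emeasure_mono sets_PiM_I_finite S) auto
  also have "\<dots> = (\<Prod>i\<in>S. emeasure lborel (cball (0::'a) (2 * B)))"
    using S by (intro product_sigma_finite.emeasure_PiM)
      (auto simp: product_sigma_finite_def lborel.sigma_finite_measure_axioms)
  also have "\<dots> < top"
    using emeasure_bounded_finite[of "cball (0::'a) (2 * B)"] by (simp add: power_less_top_ennreal)
  finally show ?thesis .
qed

lemma distr_PiM_reindex_bij:
  assumes N: "sigma_finite_measure N" and f: "bij_betw f T S" and T: "finite T"
  shows "distr (PiM S (\<lambda>_. N)) (PiM T (\<lambda>_. N)) (\<lambda>x. \<lambda>j\<in>T. x (f j)) = PiM T (\<lambda>_. N)"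
    (is "distr _ _ ?t = _")
proof -
  interpret P: product_sigma_finite "\<lambda>_. N"
    by (simp add: product_sigma_finite_def N)
  have S: "finite S" using f T bij_betw_finite by blast
  have fT: "f ` T = S" using f by (simp add: bij_betw_def)
  have t: "?t \<in> measurable (PiM S (\<lambda>_. N)) (PiM T (\<lambda>_. N))"
    by (intro measurable_restrict measurable_component_singleton) (use fT in auto)
  show ?thesis
  proof (rule P.PiM_eqI[OF T])
    fix A assume A: "\<And>j. j \<in> T \<Longrightarrow> A j \<in> sets N"
    define g where "g = the_inv_into T f"
    have g: "\<And>i. i \<in> S \<Longrightarrow> g i \<in> T" "\<And>i. i \<in> S \<Longrightarrow> f (g i) = i" "\<And>j. j \<in> T \<Longrightarrow> g (f j) = j"
      using f by (auto simp: g_def bij_betw_def the_inv_into_into f_the_inv_into_f the_inv_into_f_f)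
    have "?t -` PiE T A \<inter> space (PiM S (\<lambda>_. N)) = PiE S (\<lambda>i. A (g i))"
    proof (intro set_eqI)
      fix x
      have "x \<in> ?t -` PiE T A \<inter> space (PiM S (\<lambda>_. N)) \<longleftrightarrow> x \<in> PiE S (\<lambda>_. space N) \<and> (\<forall>j\<in>T. x (f j) \<in> A j)"
        by (auto simp: space_PiM Pi_iff)
      also have "\<dots> \<longleftrightarrow> x \<in> PiE S (\<lambda>i. A (g i))"
        unfolding PiE_iff fT[symmetric] using g(3) A sets.sets_into_space by fastforce
      finally show "x \<in> ?t -` PiE T A \<inter> space (PiM S (\<lambda>_. N)) \<longleftrightarrow> x \<in> PiE S (\<lambda>i. A (g i))" .
    qed
    then have "emeasure (distr (PiM S (\<lambda>_. N)) (PiM T (\<lambda>_. N)) ?t) (PiE T A)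
        = emeasure (PiM S (\<lambda>_. N)) (PiE S (\<lambda>i. A (g i)))"
      using A by (subst emeasure_distr[OF t]) (auto intro!: sets_PiM_I_finite T)
    also have "\<dots> = (\<Prod>i\<in>S. emeasure N (A (g i)))"
      using A g by (intro P.emeasure_PiM S) auto
    also have "\<dots> = (\<Prod>j\<in>T. emeasure N (A j))"
      using g by (subst prod.reindex_bij_betw[OF f, symmetric]) (auto intro!: prod.cong)
    finally show "emeasure (distr (PiM S (\<lambda>_. N)) (PiM T (\<lambda>_. N)) ?t) (PiE T A) = (\<Prod>j\<in>T. emeasure N (A j))" .
  qed simp
qed

lemma emeasure_diff_body_on_card_eq:
  fixes K :: "'a::euclidean_space set"
  assumes S: "finite S" and T: "finite T" and card: "card T = card S" and K: "compact K"
  shows "emeasure (PiM S (\<lambda>_. lborel)) (diff_body_on S K) = emeasure (PiM T (\<lambda>_. lborel :: 'a measure)) (diff_body_on T K)"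
proof -
  obtain f where f: "bij_betw f T S" using finite_same_card_bij[OF T S card] by blast
  define t where "t = (\<lambda>x :: nat \<Rightarrow> 'a. \<lambda>j\<in>T. x (f j))"
  have fT: "f ` T = S" using f by (simp add: bij_betw_def)
  have t: "t \<in> measurable (PiM S (\<lambda>_. lborel)) (PiM T (\<lambda>_. lborel :: 'a measure))"
    unfolding t_def by (intro measurable_restrict measurable_component_singleton) (use fT in auto)
  have "t -` diff_body_on T K \<inter> space (PiM S (\<lambda>_. lborel)) = diff_body_on S K"
  proof (intro set_eqI)
    fix x
    have "x \<in> t -` diff_body_on T K \<inter> space (PiM S (\<lambda>_. lborel))
        \<longleftrightarrow> x \<in> PiE S (\<lambda>_. UNIV) \<and> (\<exists>y\<in>K. \<forall>j\<in>T. y - x (f j) \<in> K)"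
      by (simp add: diff_body_on_def t_def space_PiM conj_commute)
    also have "\<dots> \<longleftrightarrow> x \<in> diff_body_on S K"
      unfolding diff_body_on_def fT[symmetric] by blast
    finally show "x \<in> t -` diff_body_on T K \<inter> space (PiM S (\<lambda>_. lborel)) \<longleftrightarrow> x \<in> diff_body_on S K" .
  qed
  then have "emeasure (distr (PiM S (\<lambda>_. lborel)) (PiM T (\<lambda>_. lborel)) t) (diff_body_on T K)
      = emeasure (PiM S (\<lambda>_. lborel)) (diff_body_on S K)"
    by (simp add: emeasure_distr[OF t sets_diff_body_on[OF countable_finite[OF T] K]])
  moreover have "distr (PiM S (\<lambda>_. lborel)) (PiM T (\<lambda>_. lborel)) t = PiM T (\<lambda>_. lborel)"
    unfolding t_def by (rule distr_PiM_reindex_bij[OF lborel.sigma_finite_measure_axioms f T])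
  ultimately show ?thesis
    by simp
qed

section \<open>The inequality between consecutive difference bodies\<close>

lemma emeasure_diff_body_on_Suc_pow_le:
  fixes K :: "'a::euclidean_space set"
  assumes K: "compact K" and m: "m \<ge> 1"
  shows "emeasure (PiM {..<m + 1} (\<lambda>_. lborel)) (diff_body_on {..<m + 1} K) ^ m
    \<le> emeasure (PiM {..<m} (\<lambda>_. lborel :: 'a measure)) (diff_body_on {..<m} K) ^ (m + 1)"
proof -
  define I where "I = {..<m + 1}"
  define e where "e = emeasure (PiM {..<m} (\<lambda>_. lborel :: 'a measure)) (diff_body_on {..<m} K)"
  define F where "F j = (indicator (diff_body_on (I - {j}) K) :: (nat \<Rightarrow> 'a) \<Rightarrow> ennreal)" for j
  have I: "finite I" "card I = m + 1" by (simp_all add: I_def)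
  have sets: "diff_body_on J K \<in> sets (PiM J (\<lambda>_. lborel))" if "J \<subseteq> I" for J
    using I(1) K that by (intro sets_diff_body_on countable_finite) (auto dest: finite_subset)
  have int_F: "(\<integral>\<^sup>+y. F j y \<partial>PiM (I - {j}) (\<lambda>_. lborel)) = e" if "j \<in> I" for j
    using that I sets[of "I - {j}"] emeasure_diff_body_on_card_eq[OF _ _ _ K, of "I - {j}" "{..<m}"]
    by (simp add: F_def e_def)
  have "emeasure (PiM I (\<lambda>_. lborel)) (diff_body_on I K) = (\<integral>\<^sup>+x. indicator (diff_body_on I K) x \<partial>PiM I (\<lambda>_. lborel))"
    using sets[of I] by simp
  also have "\<dots> \<le> (\<integral>\<^sup>+x. (\<Prod>j\<in>I. enn_powr (F j (restrict x (I - {j}))) (1 / real (card I - 1))) \<partial>PiM I (\<lambda>_. lborel))"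
    by (intro nn_integral_mono)
      (auto simp: F_def indicator_def restrict_in_diff_body_on[where J="I - {_}"] split: if_splits)
  also have "\<dots> \<le> (\<Prod>j\<in>I. enn_powr (\<integral>\<^sup>+y. F j y \<partial>PiM (I - {j}) (\<lambda>_. lborel)) (1 / real (card I - 1)))"
    using I m sets by (intro nn_integral_Loomis_Whitney lborel.sigma_finite_measure_axioms)
      (auto simp: F_def)
  also have "\<dots> = enn_powr e (1 / real m) ^ (m + 1)"
    using I int_F by simp
  finally have "emeasure (PiM I (\<lambda>_. lborel)) (diff_body_on I K) ^ m \<le> (enn_powr e (1 / real m) ^ (m + 1)) ^ m"
    by (rule power_mono) simp
  also have "\<dots> = (enn_powr e (1 / real m) ^ m) ^ (m + 1)"
    by (simp only: power_mult[symmetric] mult.commute)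
  also have "\<dots> = e ^ (m + 1)"
    using m by (simp add: enn_powr_of_nat[symmetric] enn_powr_powr)
  finally show ?thesis by (simp only: I_def e_def)
qed

lemma measure_diff_body_Suc_pow_le:
  fixes K :: "(real ^ 'n) set"
  assumes K: "compact K" "K \<noteq> {}"
  shows "measure (PiM {..<m + 1} (\<lambda>_. lborel)) (diff_body (m + 1) K) ^ m
    \<le> measure (PiM {..<m} (\<lambda>_. lborel :: (real ^ 'n) measure)) (diff_body m K) ^ (m + 1)"
proof (cases "m = 0")
  case True
  then show ?thesis
    using K by (simp add: diff_body_eq_diff_body_on diff_body_on_empty_index measure_def)
next
  case False
  have "emeasure (PiM {..<m} (\<lambda>_. lborel :: (real ^ 'n) measure)) (diff_body_on {..<m} K) < top"
    using K(1) by (intro emeasure_diff_body_on_less_top compact_imp_bounded) auto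
  then have "enn2real (emeasure (PiM {..<m + 1} (\<lambda>_. lborel)) (diff_body_on {..<m + 1} K) ^ m)
      \<le> enn2real (emeasure (PiM {..<m} (\<lambda>_. lborel :: (real ^ 'n) measure)) (diff_body_on {..<m} K) ^ (m + 1))"
    using False by (intro enn2real_mono emeasure_diff_body_on_Suc_pow_le K(1))
      (simp_all add: ennreal_mult_less_top power_less_top_ennreal)
  then show ?thesis
    unfolding diff_body_eq_diff_body_on measure_def enn2real_power .
qed

theorem corollary3p3:
  fixes K :: "(real ^ 'n) set" and m :: nat
  assumes "convex_body K"
  shows "S_ratio (m + 1) K ^ m \<le> S_ratio m K ^ (m + 1)"
proof -
  have K: "compact K" "K \<noteq> {}"
    using assms interior_subset[of K] by (auto simp: convex_body_def)
  let ?V = "measure lborel K"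
  have "S_ratio (m + 1) K ^ m
      = measure (PiM {..<m + 1} (\<lambda>_. lborel)) (diff_body (m + 1) K) ^ m / ?V ^ ((m + 1) * m)"
    by (simp only: S_ratio_def power_divide power_mult)
  also have "\<dots> \<le> measure (PiM {..<m} (\<lambda>_. lborel)) (diff_body m K) ^ (m + 1) / ?V ^ ((m + 1) * m)"
    by (intro divide_right_mono measure_diff_body_Suc_pow_le K) simp
  also have "\<dots> = S_ratio m K ^ (m + 1)"
    by (simp only: S_ratio_def power_divide power_mult mult.commute)
  finally show ?thesis .
qed

end
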